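(* Let $X$ be a real reflexive Banach space, $T:X\rightrightarrows X^{\ast}$ maximally monotone, and $h,h'\in\mathcal{H}(T)$; set $E=L^{h}$ and $E'=L^{h'}$. Then: (i) $E$ and $E'$ are mutually additive if and only if $h^{\ast}\circ i\le h'$; in particular, $E$ is additive if and only if $h^{\ast}\circ i\le h$; (ii) $h=h^{\ast}\circ i$ if and only if $L^{h}$ is maximally additive. In particular, $E$ is mutually additive with $L^{h^{\ast}\circ i}$, and $L^{h^{\ast}\circ i}$ contains (in the sense $E''(\epsilon,x)\subset L^{h^{\ast}\circ i}(\epsilon,x)$ for all $\epsilon\ge0,x\in X$) every enlargement $E''=L^{g}$, $g\in\mathcal{H}(T)$, that is mutually additive with $E$.
   Context: $X^{\ast}$ is the dual of $X$ with pairing $\langle\cdot,\cdot\rangle$. The dual of $X\times X^{\ast}$ is identified with $X^{\ast}\times X$ via $\langle (x,x^{\ast}),(y^{\ast},y)\rangle=\langle x,y^{\ast}\rangle+\langle y,x^{\ast}\rangle$; for $g:X\times X^{\ast}\to\mathbb{R}\cup\{+\infty\}$, $g^{\ast}(y^{\ast},y)=\sup_{(x,x^{\ast})}\{\langle x,y^{\ast}\rangle+\langle y,x^{\ast}\rangle-g(x,x^{\ast})\}$, and $i(x,x^{\ast})=(x^{\ast},x)$. $\mathcal{H}(T)$ is the family of lower semicontinuous convex $h:X\times X^{\ast}\to\mathbb{R}\cup\{+\infty\}$ with $h(x,x^{\ast})\ge\langle x,x^{\ast}\rangle$ everywhere and equality whenever $x^{\ast}\in T(x)$ (if $h\in\mathcal{H}(T)$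 then $h^{\ast}\circ i\in\mathcal{H}(T)$). For $g\in\mathcal{H}(T)$, $L^{g}:[0,\infty)\times X\rightrightarrows X^{\ast}$ is $L^{g}(\epsilon,x)=\{x^{\ast}:g(x,x^{\ast})\le\langle x,x^{\ast}\rangle+\epsilon\}$; every enlargement in the family $\mathbb{E}(T)$ is of the form $L^g$ for a unique $g\in\mathcal{H}(T)$. Two enlargements $E,E'$ are mutually additive if $\langle x-y,x^{\ast}-y^{\ast}\rangle\ge-(\epsilon+\eta)$ for all $\epsilon,\eta\ge0$, $x,y\in X$, $x^{\ast}\in E(\epsilon,x)$, $y^{\ast}\in E'(\eta,y)$; $E$ is additive if it is mutually additive with itself. An additive $E=L^{h}$ is maximally additive if whenever $E'=L^{g}$ ($g\in\mathcal{H}(T)$) is additive with $E(\epsilon,x)\subset E'(\epsilon,x)$ for all $\epsilon\ge0$, $x\in X$, then $E=E'$. *)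

theory Defs
  imports "HOL-Analysis.Analysis"
begin

text \<open>The space X is a type 'a of class banach; its dual X* is 'a \<Rightarrow>L real.
  The pairing is pair x xs = xs x.  Functions on X \<times> X* take values in ereal.\<close>

definition pair :: "'a::real_normed_vector \<Rightarrow> ('a \<Rightarrow>\<^sub>L real) \<Rightarrow> real" where
  "pair x xs = blinfun_apply xs x"

definition reflexive_space :: "'a::real_normed_vector itself \<Rightarrow> bool" where
  "reflexive_space (_::'a itself) \<longleftrightarrow>
     (\<forall>\<phi> :: ('a \<Rightarrow>\<^sub>L real) \<Rightarrow>\<^sub>L real. \<exists>x::'a. \<forall>f. blinfun_apply \<phi> f = blinfun_apply f x)"

definition monotone_op :: "('a::real_normed_vector \<Rightarrow> ('a \<Rightarrow>\<^sub>L real) set) \<Rightarrow> bool" where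
  "monotone_op T \<longleftrightarrow> (\<forall>x y xs ys. xs \<in> T x \<longrightarrow> ys \<in> T y \<longrightarrow> pair (x - y) (xs - ys) \<ge> 0)"

definition maximal_monotone :: "('a::real_normed_vector \<Rightarrow> ('a \<Rightarrow>\<^sub>L real) set) \<Rightarrow> bool" where
  "maximal_monotone T \<longleftrightarrow> monotone_op T \<and>
     (\<forall>S. monotone_op S \<and> (\<forall>x. T x \<subseteq> S x) \<longrightarrow> S = T)"

text \<open>Lower semicontinuity (norm topology on X \<times> X*): closed sublevel sets.\<close>
definition lsc_fun :: "('b::topological_space \<Rightarrow> ereal) \<Rightarrow> bool" where
  "lsc_fun g \<longleftrightarrow> (\<forall>c::ereal. closed {z. g z \<le> c})"

definition convex_ereal :: "('b::real_vector \<Rightarrow> ereal) \<Rightarrow> bool" where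
  "convex_ereal g \<longleftrightarrow> (\<forall>u v t. 0 < t \<and> t < 1 \<longrightarrow>
      g (t *\<^sub>R u + (1 - t) *\<^sub>R v) \<le> ereal t * g u + ereal (1 - t) * g v)"

text \<open>Fenchel conjugate on X \<times> X*, with dual identified with X* \<times> X.\<close>
definition fconj :: "('a::real_normed_vector \<times> ('a \<Rightarrow>\<^sub>L real) \<Rightarrow> ereal)
    \<Rightarrow> ('a \<Rightarrow>\<^sub>L real) \<times> 'a \<Rightarrow> ereal" where
  "fconj g = (\<lambda>(ys, y). Sup ((\<lambda>(x, xs). ereal (pair x ys + pair y xs) - g (x, xs)) ` UNIV))"

definition iswap :: "'a \<times> 'b \<Rightarrow> 'b \<times> 'a" where
  "iswap z = (snd z, fst z)"

definition HT :: "('a::real_normed_vector \<Rightarrow> ('a \<Rightarrow>\<^sub>L real) set)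
    \<Rightarrow> ('a \<times> ('a \<Rightarrow>\<^sub>L real) \<Rightarrow> ereal) set" where
  "HT T = {h. lsc_fun h \<and> convex_ereal h
              \<and> (\<forall>x xs. h (x, xs) \<ge> ereal (pair x xs))
              \<and> (\<forall>x xs. xs \<in> T x \<longrightarrow> h (x, xs) = ereal (pair x xs))}"

definition Lenl :: "('a::real_normed_vector \<times> ('a \<Rightarrow>\<^sub>L real) \<Rightarrow> ereal)
    \<Rightarrow> real \<Rightarrow> 'a \<Rightarrow> ('a \<Rightarrow>\<^sub>L real) set" where
  "Lenl g \<epsilon> x = {xs. g (x, xs) \<le> ereal (pair x xs + \<epsilon>)}"

definition mutually_additive :: "(real \<Rightarrow> 'a::real_normed_vector \<Rightarrow> ('a \<Rightarrow>\<^sub>L real) set)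
    \<Rightarrow> (real \<Rightarrow> 'a \<Rightarrow> ('a \<Rightarrow>\<^sub>L real) set) \<Rightarrow> bool" where
  "mutually_additive E E' \<longleftrightarrow> (\<forall>\<epsilon> \<eta> x y xs ys. \<epsilon> \<ge> 0 \<longrightarrow> \<eta> \<ge> 0 \<longrightarrow>
      xs \<in> E \<epsilon> x \<longrightarrow> ys \<in> E' \<eta> y \<longrightarrow> pair (x - y) (xs - ys) \<ge> - (\<epsilon> + \<eta>))"

definition additive :: "(real \<Rightarrow> 'a::real_normed_vector \<Rightarrow> ('a \<Rightarrow>\<^sub>L real) set) \<Rightarrow> bool" where
  "additive E \<longleftrightarrow> mutually_additive E E"

definition maximally_additive :: "('a::real_normed_vector \<Rightarrow> ('a \<Rightarrow>\<^sub>L real) set)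
    \<Rightarrow> ('a \<times> ('a \<Rightarrow>\<^sub>L real) \<Rightarrow> ereal) \<Rightarrow> bool" where
  "maximally_additive T h \<longleftrightarrow> additive (Lenl h) \<and>
     (\<forall>g \<in> HT T. additive (Lenl g) \<and> (\<forall>\<epsilon> x. \<epsilon> \<ge> 0 \<longrightarrow> Lenl h \<epsilon> x \<subseteq> Lenl g \<epsilon> x)
        \<longrightarrow> (\<forall>\<epsilon> x. \<epsilon> \<ge> 0 \<longrightarrow> Lenl h \<epsilon> x = Lenl g \<epsilon> x))"

end

theory Submission
  imports Defs
begin

text \<open>
  Write \<open>h\<^sup>\<dagger> = h\<^sup>* \<circ> i\<close>. Splitting \<open>\<langle>x - y, x\<^sup>* - y\<^sup>*\<rangle>\<close> into diagonal and cross pairings shows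
  that mutual additivity of \<open>L\<^sup>h\<close> and \<open>L\<^sup>h\<^sup>'\<close> is exactly the Fenchel--Young type inequality
  \<open>\<langle>(x,x\<^sup>*),(y\<^sup>*,y)\<rangle> \<le> h(x,x\<^sup>*) + h'(y,y\<^sup>*)\<close>, i.e. \<open>h\<^sup>\<dagger> \<le> h'\<close>; this gives (i) and the
  final assertions. If \<open>h\<^sup>\<dagger> = h\<close>, an additive \<open>g \<in> \<H>(T)\<close> with \<open>L\<^sup>h \<subseteq> L\<^sup>g\<close> satisfies
  \<open>g \<le> h = h\<^sup>\<dagger> \<le> g\<^sup>\<dagger> \<le> g\<close>. Conversely, if \<open>h\<close> is maximally additive but \<open>h\<^sup>\<dagger>(z\<^sub>0) < h(z\<^sub>0)\<close>,
  lower \<open>h\<close> at \<open>z\<^sub>0\<close> to \<open>h\<^sup>\<dagger>(z\<^sub>0)\<close> and let \<open>k\<close> be the conjugate of the result. Since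
  \<open>k\<^sup>\<dagger>\<^sup>\<dagger> = k\<close>, the midpoint \<open>g = (k + k\<^sup>\<dagger>)/2\<close> satisfies \<open>g\<^sup>\<dagger> \<le> g\<close>, so \<open>L\<^sup>g\<close> is additive;
  moreover \<open>g \<in> \<H>(T)\<close>, \<open>g \<le> h\<close> and \<open>g(z\<^sub>0) < h(z\<^sub>0)\<close>, contradicting maximality.
\<close>

definition self_pair :: "'a::real_normed_vector \<times> ('a \<Rightarrow>\<^sub>L real) \<Rightarrow> real" where
  "self_pair z = pair (fst z) (snd z)"

definition cross_pair :: "'a::real_normed_vector \<times> ('a \<Rightarrow>\<^sub>L real) \<Rightarrow> 'a \<times> ('a \<Rightarrow>\<^sub>L real) \<Rightarrow> real"
  where "cross_pair z w = pair (fst w) (snd z) + pair (fst z) (snd w)"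

definition fconj_swap :: "('a::real_normed_vector \<times> ('a \<Rightarrow>\<^sub>L real) \<Rightarrow> ereal)
    \<Rightarrow> 'a \<times> ('a \<Rightarrow>\<^sub>L real) \<Rightarrow> ereal" where
  "fconj_swap h z = (SUP w. ereal (cross_pair z w) - h w)"

lemma fconj_comp_iswap: "fconj h \<circ> iswap = fconj_swap h"
  by (rule ext)
    (auto simp: fconj_def iswap_def fconj_swap_def cross_pair_def case_prod_beta
      intro!: arg_cong[where f=Sup])

lemma cross_pair_commute: "cross_pair z w = cross_pair w z"
  by (simp add: cross_pair_def)

lemma cross_pair_self: "cross_pair z z = 2 * self_pair z"
  by (simp add: cross_pair_def self_pair_def)

lemma cross_pair_linear_left:
  "cross_pair (t *\<^sub>R u + s *\<^sub>R v) w = t * cross_pair u w + s * cross_pair v w"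
  by (simp add: cross_pair_def pair_def blinfun.bilinear_simps algebra_simps)

lemma continuous_on_cross_pair_left: "continuous_on UNIV (\<lambda>z. cross_pair z w)"
  unfolding cross_pair_def pair_def by (intro continuous_intros)

lemma pair_diff_diff:
  "pair (x - y) (xs - ys) = self_pair (x, xs) + self_pair (y, ys) - cross_pair (y, ys) (x, xs)"
  by (simp add: pair_def self_pair_def cross_pair_def blinfun.bilinear_simps)

subsection \<open>The conjugate composed with the swap\<close>

lemma fconj_swap_upper: "ereal (cross_pair z w) - h w \<le> fconj_swap h z"
  unfolding fconj_swap_def by (rule SUP_upper) simp

lemma fconj_swap_least: "(\<And>w. ereal (cross_pair z w) - h w \<le> c) \<Longrightarrow> fconj_swap h z \<le> c"
  unfolding fconj_swap_def by (rule SUP_least) simp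

lemma ereal_minus_le_swap: "ereal a - x \<le> y \<Longrightarrow> ereal a - y \<le> (x::ereal)"
  by (cases x; cases y) auto

lemma fconj_swap_antimono: "(\<And>w. g w \<le> h w) \<Longrightarrow> fconj_swap h z \<le> fconj_swap g z"
  by (rule fconj_swap_least, rule order_trans[OF _ fconj_swap_upper], rule ereal_minus_mono) auto

lemma fconj_swap_fconj_swap_le: "fconj_swap (fconj_swap h) z \<le> h z"
proof (rule fconj_swap_least)
  fix w
  have "ereal (cross_pair w z) - h z \<le> fconj_swap h w" by (rule fconj_swap_upper)
  then show "ereal (cross_pair z w) - fconj_swap h w \<le> h z"
    by (simp add: cross_pair_commute ereal_minus_le_swap)
qed

lemma fconj_swap_thrice: "fconj_swap (fconj_swap (fconj_swap h)) = fconj_swap h"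
  by (intro ext antisym fconj_swap_fconj_swap_le fconj_swap_antimono)

lemma self_pair_le_fconj_swap_midpoint:
  assumes "k z \<noteq> -\<infinity>"
  shows "ereal (self_pair z) \<le> (k z + fconj_swap k z) / 2"
proof -
  have "ereal (2 * self_pair z) - k z \<le> fconj_swap k z"
    using fconj_swap_upper[of z z k] by (simp add: cross_pair_self)
  with assms show ?thesis by (cases "k z"; cases "fconj_swap k z") auto
qed

lemma fconj_swap_neq_minf:
  assumes "h w \<noteq> \<infinity>"
  shows "fconj_swap h z \<noteq> -\<infinity>"
  using fconj_swap_upper[of z w h] assms by (cases "h w") auto

subsection \<open>Mutual additivity\<close>

lemma mutually_additive_LenlI:
  assumes h_ge: "\<And>z. ereal (self_pair z) \<le> h z" and le: "\<And>z. fconj_swap h z \<le> h' z"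
  shows "mutually_additive (Lenl h) (Lenl h')"
  unfolding mutually_additive_def
proof (intro allI impI)
  fix \<epsilon> \<eta> :: real and x y xs ys
  assume "xs \<in> Lenl h \<epsilon> x" "ys \<in> Lenl h' \<eta> y"
  then have h_le: "h (x, xs) \<le> ereal (self_pair (x, xs) + \<epsilon>)"
    and h'_le: "h' (y, ys) \<le> ereal (self_pair (y, ys) + \<eta>)"
    by (simp_all add: Lenl_def self_pair_def)
  obtain r where r: "h (x, xs) = ereal r"
    using h_le h_ge[of "(x, xs)"] by (cases "h (x, xs)") auto
  have "ereal (cross_pair (y, ys) (x, xs)) - h (x, xs) \<le> h' (y, ys)"
    using fconj_swap_upper le order_trans by blast
  with h'_le r have "cross_pair (y, ys) (x, xs) - r \<le> self_pair (y, ys) + \<eta>"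
    by (metis ereal_less_eq(3) ereal_minus(1) order_trans)
  moreover have "r \<le> self_pair (x, xs) + \<epsilon>" using h_le r by simp
  ultimately show "- (\<epsilon> + \<eta>) \<le> pair (x - y) (xs - ys)"
    unfolding pair_diff_diff by linarith
qed

lemma fconj_swap_le_if_mutually_additive:
  fixes h h' :: "'a::real_normed_vector \<times> ('a \<Rightarrow>\<^sub>L real) \<Rightarrow> ereal"
  assumes h_ge: "\<And>z. ereal (self_pair z) \<le> h z" and h'_ge: "\<And>z. ereal (self_pair z) \<le> h' z"
    and "mutually_additive (Lenl h) (Lenl h')"
  shows "fconj_swap h z \<le> h' z"
proof (rule fconj_swap_least)
  fix w :: "'a \<times> ('a \<Rightarrow>\<^sub>L real)"
  obtain y ys where z: "z = (y, ys)" by (cases z)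
  obtain x xs where w: "w = (x, xs)" by (cases w)
  show "ereal (cross_pair z w) - h w \<le> h' z"
  proof (cases "h w = \<infinity> \<or> h' z = \<infinity>")
    case False
    then obtain a b where a: "h w = ereal a" and b: "h' z = ereal b"
      using h_ge[of w] h'_ge[of z] by (cases "h w"; cases "h' z") auto
    have "xs \<in> Lenl h (a - self_pair w) x" "ys \<in> Lenl h' (b - self_pair z) y"
      using a b z w by (simp_all add: Lenl_def self_pair_def)
    moreover have "a - self_pair w \<ge> 0" "b - self_pair z \<ge> 0"
      using h_ge[of w] h'_ge[of z] a b by simp_all
    ultimately have "- ((a - self_pair w) + (b - self_pair z)) \<le> pair (x - y) (xs - ys)"
      using assms(3) unfolding mutually_additive_def by blast
    then show ?thesis using a b z w unfolding pair_diff_diff by simp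
  qed auto
qed

subsection \<open>Lower semicontinuity, convexity and midpoints\<close>

lemma closed_ereal_diff_le:
  assumes "continuous_on UNIV f"
  shows "closed {z. ereal (f z) - e \<le> (c::ereal)}"
proof (cases e)
  case (real r)
  show ?thesis
  proof (cases c)
    case (real s)
    with \<open>e = ereal r\<close> have "{z. ereal (f z) - e \<le> c} = {z. f z - r \<le> s}" by auto
    then show ?thesis by (simp add: closed_Collect_le assms continuous_on_diff)
  qed (use \<open>e = ereal r\<close> in simp_all)
next
  case MInf
  then show ?thesis by (cases "c = \<infinity>") auto
qed simp

lemma lsc_fun_fconj_swap: "lsc_fun (fconj_swap h)"
  unfolding lsc_fun_def
proof
  fix c
  have "{z. fconj_swap h z \<le> c} = (\<Inter>w. {z. ereal (cross_pair z w) - h w \<le> c})"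
    by (auto intro: fconj_swap_least order_trans[OF fconj_swap_upper])
  then show "closed {z. fconj_swap h z \<le> c}"
    by (auto intro!: closed_INT closed_ereal_diff_le continuous_on_cross_pair_left)
qed

lemma convex_ereal_fconj_swap:
  assumes "\<And>w. h w \<noteq> -\<infinity>"
  shows "convex_ereal (fconj_swap h)"
  unfolding convex_ereal_def
proof (intro allI impI)
  fix u v and t :: real
  assume t: "0 < t \<and> t < 1"
  show "fconj_swap h (t *\<^sub>R u + (1 - t) *\<^sub>R v)
      \<le> ereal t * fconj_swap h u + ereal (1 - t) * fconj_swap h v"
  proof (rule fconj_swap_least)
    fix w
    show "ereal (cross_pair (t *\<^sub>R u + (1 - t) *\<^sub>R v) w) - h w
        \<le> ereal t * fconj_swap h u + ereal (1 - t) * fconj_swap h v"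
    proof (cases "h w")
      case (real r)
      have "ereal (cross_pair u w - r) \<le> fconj_swap h u" "ereal (cross_pair v w - r) \<le> fconj_swap h v"
        using fconj_swap_upper[of _ w h] real by simp_all
      then have "ereal t * ereal (cross_pair u w - r) + ereal (1 - t) * ereal (cross_pair v w - r)
          \<le> ereal t * fconj_swap h u + ereal (1 - t) * fconj_swap h v"
        using t by (intro add_mono ereal_mult_left_mono) auto
      moreover have "ereal t * ereal (cross_pair u w - r) + ereal (1 - t) * ereal (cross_pair v w - r)
          = ereal (cross_pair (t *\<^sub>R u + (1 - t) *\<^sub>R v) w) - h w"
        using real unfolding cross_pair_linear_left by (simp add: algebra_simps)
      ultimately show ?thesis by simp
    qed (use assms in auto)
  qed
qed

lemma ereal_less_midpoint_split:
  assumes "ereal s < (X + Y) / 2" "X \<noteq> -\<infinity>" "Y \<noteq> -\<infinity>"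
  shows "\<exists>r1 r2. ereal r1 < X \<and> ereal r2 < Y \<and> s \<le> (r1 + r2) / 2"
proof (cases X)
  case (real p)
  show ?thesis
  proof (cases Y)
    case (real q)
    with \<open>X = ereal p\<close> assms(1) show ?thesis
      by (intro exI[of _ "p - ((p + q) / 2 - s)"] exI[of _ "q - ((p + q) / 2 - s)"]) auto
  next
    case PInf
    with \<open>X = ereal p\<close> show ?thesis by (intro exI[of _ "p - 1"] exI[of _ "2 * s - (p - 1)"]) auto
  qed (use assms in auto)
next
  case PInf
  show ?thesis
  proof (cases Y)
    case (real q)
    with \<open>X = \<infinity>\<close> show ?thesis by (intro exI[of _ "2 * s - (q - 1)"] exI[of _ "q - 1"]) auto
  next
    case PInf
    with \<open>X = \<infinity>\<close> show ?thesis by (intro exI[of _ s] exI[of _ s]) auto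
  qed (use assms in auto)
qed (use assms in auto)

lemma lsc_fun_iff_open_superlevel: "lsc_fun f \<longleftrightarrow> (\<forall>c. open {z. c < f z})"
proof -
  have "{z. c < f z} = - {z. f z \<le> c}" for c by auto
  then show ?thesis by (simp add: lsc_fun_def open_closed)
qed

lemma lsc_fun_midpoint:
  assumes a: "lsc_fun a" and b: "lsc_fun b"
    and a_fin: "\<And>z. a z \<noteq> -\<infinity>" and b_fin: "\<And>z. b z \<noteq> -\<infinity>"
  shows "lsc_fun (\<lambda>z. (a z + b z) / 2)"
  unfolding lsc_fun_iff_open_superlevel
proof (intro allI, subst open_subopen, intro ballI)
  fix c z
  assume "z \<in> {z. c < (a z + b z) / 2}"
  then obtain s where s: "c < ereal s" "ereal s < (a z + b z) / 2"
    using ereal_dense2 by auto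
  then obtain r1 r2 where r: "ereal r1 < a z" "ereal r2 < b z" "s \<le> (r1 + r2) / 2"
    using ereal_less_midpoint_split a_fin b_fin by blast
  let ?U = "{z. ereal r1 < a z} \<inter> {z. ereal r2 < b z}"
  have "open ?U" using a b by (auto simp: lsc_fun_iff_open_superlevel)
  moreover have "?U \<subseteq> {z. c < (a z + b z) / 2}"
  proof
    fix y
    assume "y \<in> ?U"
    then have "ereal ((r1 + r2) / 2) < (a y + b y) / 2"
      by (cases "a y"; cases "b y") auto
    moreover have "c < ereal ((r1 + r2) / 2)"
      using s(1) r(3) by (meson ereal_less_eq(3) less_le_trans)
    ultimately show "y \<in> {z. c < (a z + b z) / 2}" by auto
  qed
  ultimately show "\<exists>U. open U \<and> z \<in> U \<and> U \<subseteq> {z. c < (a z + b z) / 2}"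
    using r by blast
qed

lemma ereal_convex_combination_midpoint:
  assumes "A \<le> ereal t * a1 + ereal (1 - t) * a2" "B \<le> ereal t * b1 + ereal (1 - t) * b2"
    "a1 \<noteq> -\<infinity>" "a2 \<noteq> -\<infinity>" "b1 \<noteq> -\<infinity>" "b2 \<noteq> -\<infinity>" "0 < t" "t < 1"
  shows "(A + B) / 2 \<le> ereal t * ((a1 + b1) / 2) + ereal (1 - t) * ((a2 + b2) / 2)"
proof (cases "a1 = \<infinity> \<or> a2 = \<infinity> \<or> b1 = \<infinity> \<or> b2 = \<infinity>")
  case True
  then have "ereal t * ((a1 + b1) / 2) + ereal (1 - t) * ((a2 + b2) / 2) = \<infinity>"
    using assms by (cases a1; cases a2; cases b1; cases b2) (auto simp: ereal_mult_infty)
  then show ?thesis by (metis ereal_less_eq(1))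
next
  case False
  then obtain p1 p2 q1 q2 where e: "a1 = ereal p1" "a2 = ereal p2" "b1 = ereal q1" "b2 = ereal q2"
    using assms by (cases a1; cases a2; cases b1; cases b2) auto
  with assms show ?thesis by (cases A; cases B) (auto simp: field_simps)
qed

lemma convex_ereal_midpoint:
  assumes "convex_ereal a" "convex_ereal b" "\<And>z. a z \<noteq> -\<infinity>" "\<And>z. b z \<noteq> -\<infinity>"
  shows "convex_ereal (\<lambda>z. (a z + b z) / 2)"
  using assms unfolding convex_ereal_def by (blast intro: ereal_convex_combination_midpoint)

lemma fconj_swap_midpoint_le:
  assumes a_fin: "\<And>z. a z \<noteq> -\<infinity>" and b_fin: "\<And>z. b z \<noteq> -\<infinity>"
  shows "fconj_swap (\<lambda>z. (a z + b z) / 2) z \<le> (fconj_swap a z + fconj_swap b z) / 2"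
proof (rule fconj_swap_least)
  fix w
  show "ereal (cross_pair z w) - (a w + b w) / 2 \<le> (fconj_swap a z + fconj_swap b z) / 2"
  proof (cases "a w = \<infinity> \<or> b w = \<infinity>")
    case True
    then show ?thesis using a_fin[of w] b_fin[of w] by (cases "a w"; cases "b w") auto
  next
    case False
    then obtain p q where pq: "a w = ereal p" "b w = ereal q"
      using a_fin[of w] b_fin[of w] by (cases "a w"; cases "b w") auto
    have "ereal (cross_pair z w - p) \<le> fconj_swap a z" "ereal (cross_pair z w - q) \<le> fconj_swap b z"
      using fconj_swap_upper[of z w a] fconj_swap_upper[of z w b] pq by simp_all
    then show ?thesis
      using pq by (cases "fconj_swap a z"; cases "fconj_swap b z") (auto simp: field_simps)
  qed
qed

lemma fconj_swap_midpoint_of_conjugate_le: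
  assumes "\<And>z. fconj_swap u z \<noteq> -\<infinity>" "\<And>z. fconj_swap (fconj_swap u) z \<noteq> -\<infinity>"
  shows "fconj_swap (\<lambda>z. (fconj_swap u z + fconj_swap (fconj_swap u) z) / 2) z
      \<le> (fconj_swap u z + fconj_swap (fconj_swap u) z) / 2"
  using fconj_swap_midpoint_le[where a = "fconj_swap u" and b = "fconj_swap (fconj_swap u)", OF assms]
  by (simp add: fconj_swap_thrice add.commute)

lemma HT_self_pair_le: "g \<in> HT T \<Longrightarrow> ereal (self_pair z) \<le> g z"
  by (cases z) (auto simp: HT_def self_pair_def)

lemma HT_eq_self_pair_on_graph: "g \<in> HT T \<Longrightarrow> xs \<in> T x \<Longrightarrow> g (x, xs) = ereal (self_pair (x, xs))"
  by (auto simp: HT_def self_pair_def)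

lemma ereal_midpoint_le: "A \<le> H \<Longrightarrow> B \<le> H \<Longrightarrow> (A + B) / 2 \<le> (H::ereal)"
  by (cases A; cases B; cases H) auto

lemma midpoint_of_conjugate_in_HT:
  assumes hH: "h \<in> HT T" and u_fin: "\<And>z. u z \<noteq> -\<infinity>"
    and k_fin: "\<And>z. fconj_swap u z \<noteq> -\<infinity>" and kk_fin: "\<And>z. fconj_swap (fconj_swap u) z \<noteq> -\<infinity>"
    and k_le: "\<And>z. fconj_swap u z \<le> h z" and kk_le: "\<And>z. fconj_swap (fconj_swap u) z \<le> h z"
  shows "(\<lambda>z. (fconj_swap u z + fconj_swap (fconj_swap u) z) / 2) \<in> HT T"
    (is "?g \<in> HT T")
proof -
  have ge: "ereal (self_pair z) \<le> ?g z" for z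
    by (rule self_pair_le_fconj_swap_midpoint[OF k_fin])
  have le: "?g z \<le> h z" for z by (rule ereal_midpoint_le[OF k_le kk_le])
  show ?thesis
    unfolding HT_def
  proof (intro CollectI conjI allI impI)
    show "lsc_fun ?g" by (intro lsc_fun_midpoint lsc_fun_fconj_swap k_fin kk_fin)
    show "convex_ereal ?g" by (intro convex_ereal_midpoint convex_ereal_fconj_swap u_fin k_fin kk_fin)
    fix x xs
    show "ereal (pair x xs) \<le> ?g (x, xs)" using ge[of "(x, xs)"] by (simp add: self_pair_def)
    assume "xs \<in> T x"
    then show "?g (x, xs) = ereal (pair x xs)"
      using HT_eq_self_pair_on_graph[OF hH] ge[of "(x, xs)"] le[of "(x, xs)"]
      by (metis antisym fst_conv self_pair_def snd_conv)
  qed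
qed

subsection \<open>Maximal additivity\<close>

lemma le_if_Lenl_subset:
  assumes h_ge: "\<And>z. ereal (self_pair z) \<le> h z"
    and sub: "\<forall>\<epsilon> x. \<epsilon> \<ge> 0 \<longrightarrow> Lenl h \<epsilon> x \<subseteq> Lenl g \<epsilon> x"
  shows "g z \<le> h z"
proof (cases "h z")
  case (real r)
  obtain x xs where z: "z = (x, xs)" by (cases z)
  have "xs \<in> Lenl h (r - self_pair z) x" using real z by (simp add: Lenl_def self_pair_def)
  moreover have "r - self_pair z \<ge> 0" using h_ge[of z] real by simp
  ultimately have "xs \<in> Lenl g (r - self_pair z) x" using sub by blast
  then show ?thesis using real z by (simp add: Lenl_def self_pair_def)
qed (use h_ge[of z] in auto)

lemma Lenl_antimono: "(\<And>z. g z \<le> h z) \<Longrightarrow> Lenl h \<epsilon> x \<subseteq> Lenl g \<epsilon> x"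
  by (auto simp: Lenl_def intro: order_trans)

lemma maximally_additive_eq_if_le:
  assumes "maximally_additive T h" "h \<in> HT T" "g \<in> HT T" "additive (Lenl g)" "\<And>z. g z \<le> h z"
  shows "g = h"
proof -
  have "\<forall>\<epsilon> x. \<epsilon> \<ge> 0 \<longrightarrow> Lenl h \<epsilon> x \<subseteq> Lenl g \<epsilon> x"
    using Lenl_antimono assms(5) by blast
  with assms(1,3,4) have "\<forall>\<epsilon> x. \<epsilon> \<ge> 0 \<longrightarrow> Lenl g \<epsilon> x \<subseteq> Lenl h \<epsilon> x"
    unfolding maximally_additive_def by blast
  then have "h z \<le> g z" for z by (rule le_if_Lenl_subset[OF HT_self_pair_le[OF assms(3)]])
  with assms(5) show ?thesis by (intro ext antisym)
qed

lemma maximally_additive_if_fconj_swap_eq: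
  assumes hH: "h \<in> HT T" and fix_h: "fconj_swap h = h"
  shows "maximally_additive T h"
  unfolding maximally_additive_def
proof (intro conjI ballI impI allI)
  have h_ge: "\<And>z. ereal (self_pair z) \<le> h z" by (rule HT_self_pair_le[OF hH])
  show "additive (Lenl h)"
    unfolding additive_def by (rule mutually_additive_LenlI[OF h_ge]) (simp add: fix_h)
  fix g and \<epsilon> :: real and x
  assume gH: "g \<in> HT T" and g: "additive (Lenl g) \<and> (\<forall>\<epsilon> x. 0 \<le> \<epsilon> \<longrightarrow> Lenl h \<epsilon> x \<subseteq> Lenl g \<epsilon> x)"
  have g_ge: "\<And>z. ereal (self_pair z) \<le> g z" by (rule HT_self_pair_le[OF gH])
  have g_le: "g z \<le> h z" for z by (rule le_if_Lenl_subset[OF h_ge]) (use g in auto)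
  have "h z \<le> g z" for z
  proof -
    have "h z = fconj_swap h z" by (simp add: fix_h)
    also have "\<dots> \<le> fconj_swap g z" by (rule fconj_swap_antimono[OF g_le])
    also have "\<dots> \<le> g z"
      by (rule fconj_swap_le_if_mutually_additive[OF g_ge g_ge]) (use g in \<open>simp add: additive_def\<close>)
    finally show ?thesis .
  qed
  with g_le have "g = h" by (intro ext antisym)
  then show "Lenl h \<epsilon> x = Lenl g \<epsilon> x" by simp
qed

lemma maximal_monotone_graph_nonempty:
  assumes "maximal_monotone (T :: 'a::real_normed_vector \<Rightarrow> ('a \<Rightarrow>\<^sub>L real) set)"
  shows "\<exists>x xs. xs \<in> T x"
proof (rule ccontr)
  assume empty: "\<nexists>x xs. xs \<in> T x"
  define S where "S = (\<lambda>x::'a. if x = 0 then {0::'a \<Rightarrow>\<^sub>L real} else {})"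
  have "monotone_op S" unfolding monotone_op_def S_def pair_def by auto
  with assms empty have "S = T" unfolding maximal_monotone_def by blast
  then have "0 \<in> T 0" by (metis S_def singletonI)
  with empty show False by blast
qed

lemma fconj_swap_lowered_le:
  assumes le: "\<And>z. fconj_swap h z \<le> h z" and c: "fconj_swap h z0 = ereal c"
  shows "fconj_swap (h(z0 := ereal c)) z \<le> h z"
proof (rule fconj_swap_least)
  fix w
  show "ereal (cross_pair z w) - (h(z0 := ereal c)) w \<le> h z"
  proof (cases "w = z0")
    case True
    have "ereal (cross_pair z0 z) - h z \<le> ereal c" using fconj_swap_upper[of z0 z h] c by simp
    then have "ereal (cross_pair z0 z) - ereal c \<le> h z" by (rule ereal_minus_le_swap)
    with True show ?thesis by (simp add: cross_pair_commute)
  qed (use fconj_swap_upper[of z w h] le[of z] in auto)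
qed

lemma fconj_swap_lowered_at:
  assumes c: "fconj_swap h z0 = ereal c"
  shows "fconj_swap (h(z0 := ereal c)) z0 \<le> ereal (max c (2 * self_pair z0 - c))"
proof (rule fconj_swap_least)
  fix w
  show "ereal (cross_pair z0 w) - (h(z0 := ereal c)) w \<le> ereal (max c (2 * self_pair z0 - c))"
  proof (cases "w = z0")
    case False
    then have "ereal (cross_pair z0 w) - (h(z0 := ereal c)) w \<le> ereal c"
      using fconj_swap_upper[of z0 w h] c by simp
    then show ?thesis by (simp add: order_trans)
  qed (simp add: cross_pair_self)
qed

lemma ereal_midpoint_less:
  assumes "K \<le> ereal (max c (2 * p - c))" "L \<le> ereal c" "ereal c < H" "ereal (2 * p) - H \<le> ereal c"
  shows "(K + L) / 2 < H"
  using assms by (cases H; cases K; cases L) (auto simp: max_def split: if_splits)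

lemma additive_HT_below_if_fconj_swap_less:
  assumes hH: "h \<in> HT T" and le: "\<And>z. fconj_swap h z \<le> h z"
    and c: "fconj_swap h z0 = ereal c" and less: "ereal c < h z0"
  shows "\<exists>g \<in> HT T. additive (Lenl g) \<and> (\<forall>z. g z \<le> h z) \<and> g z0 < h z0"
proof -
  define u where "u = h(z0 := ereal c)"
  define k where "k = fconj_swap u"
  define g where "g = (\<lambda>z. (k z + fconj_swap k z) / 2)"
  have u_fin: "u z \<noteq> -\<infinity>" for z using HT_self_pair_le[OF hH, of z] by (auto simp: u_def)
  have u_le: "u z \<le> h z" for z using less by (auto simp: u_def)
  have k_le: "k z \<le> h z" for z unfolding k_def u_def by (rule fconj_swap_lowered_le[OF le c])
  have k_z0: "k z0 \<le> ereal (max c (2 * self_pair z0 - c))"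
    unfolding k_def u_def by (rule fconj_swap_lowered_at[OF c])
  have kk_le: "fconj_swap k z \<le> u z" for z unfolding k_def by (rule fconj_swap_fconj_swap_le)
  have kk_le_h: "fconj_swap k z \<le> h z" for z using kk_le u_le order_trans by blast
  have k_fin: "k z \<noteq> -\<infinity>" for z unfolding k_def by (rule fconj_swap_neq_minf[of u z0]) (simp add: u_def)
  have "k z0 \<noteq> \<infinity>" using k_z0 by (metis PInfty_neq_ereal(1) ereal_infty_less_eq(1))
  then have kk_fin: "fconj_swap k z \<noteq> -\<infinity>" for z by (rule fconj_swap_neq_minf)
  have "g \<in> HT T"
    using midpoint_of_conjugate_in_HT[OF hH u_fin k_fin[unfolded k_def] kk_fin[unfolded k_def]
        k_le[unfolded k_def] kk_le_h[unfolded k_def]]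
    by (simp add: g_def k_def)
  moreover have "additive (Lenl g)" unfolding additive_def g_def
  proof (rule mutually_additive_LenlI)
    show "ereal (self_pair z) \<le> (k z + fconj_swap k z) / 2" for z
      by (rule self_pair_le_fconj_swap_midpoint[OF k_fin])
    show "fconj_swap (\<lambda>z. (k z + fconj_swap k z) / 2) z \<le> (k z + fconj_swap k z) / 2" for z
      unfolding k_def by (rule fconj_swap_midpoint_of_conjugate_le) (use k_fin kk_fin in \<open>auto simp: k_def\<close>)
  qed
  moreover have "g z \<le> h z" for z
    unfolding g_def by (rule ereal_midpoint_le[OF k_le kk_le_h])
  moreover have "g z0 < h z0"
    unfolding g_def
  proof (rule ereal_midpoint_less[OF k_z0])
    show "fconj_swap k z0 \<le> ereal c" using kk_le[of z0] by (simp add: u_def)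
    show "ereal (2 * self_pair z0) - h z0 \<le> ereal c"
      using fconj_swap_upper[of z0 z0 h] c by (simp add: cross_pair_self)
  qed (rule less)
  ultimately show ?thesis by blast
qed

lemma fconj_swap_eq_if_maximally_additive:
  assumes mm: "maximal_monotone T" and hH: "h \<in> HT T" and ma: "maximally_additive T h"
  shows "fconj_swap h = h"
proof (intro ext antisym)
  show le: "fconj_swap h z \<le> h z" for z
    using ma HT_self_pair_le[OF hH]
    by (auto intro: fconj_swap_le_if_mutually_additive simp: maximally_additive_def additive_def)
  show "h z0 \<le> fconj_swap h z0" for z0
  proof (rule ccontr)
    assume "\<not> h z0 \<le> fconj_swap h z0"
    then have less: "fconj_swap h z0 < h z0" by simp
    obtain x1 xs1 where "xs1 \<in> T x1" using maximal_monotone_graph_nonempty[OF mm] by blast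
    then have "h (x1, xs1) \<noteq> \<infinity>" using HT_eq_self_pair_on_graph[OF hH] by simp
    then have "fconj_swap h z0 \<noteq> -\<infinity>" by (rule fconj_swap_neq_minf)
    with less obtain c where c: "fconj_swap h z0 = ereal c" by (cases "fconj_swap h z0") auto
    obtain g where "g \<in> HT T" "additive (Lenl g)" "\<And>z. g z \<le> h z" "g z0 < h z0"
      using additive_HT_below_if_fconj_swap_less[OF hH le c] less c by auto
    then show False using maximally_additive_eq_if_le[OF ma hH] by blast
  qed
qed

theorem proposition3p2:
  fixes T :: "'a::banach \<Rightarrow> ('a \<Rightarrow>\<^sub>L real) set"
    and h h' :: "'a \<times> ('a \<Rightarrow>\<^sub>L real) \<Rightarrow> ereal"
  assumes "reflexive_space TYPE('a)"
    and "maximal_monotone T"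
    and "h \<in> HT T" and "h' \<in> HT T"
  shows "(mutually_additive (Lenl h) (Lenl h') \<longleftrightarrow> (\<forall>z. (fconj h \<circ> iswap) z \<le> h' z))
       \<and> (additive (Lenl h) \<longleftrightarrow> (\<forall>z. (fconj h \<circ> iswap) z \<le> h z))
       \<and> (h = fconj h \<circ> iswap \<longleftrightarrow> maximally_additive T h)
       \<and> mutually_additive (Lenl h) (Lenl (fconj h \<circ> iswap))
       \<and> (\<forall>g \<in> HT T. mutually_additive (Lenl h) (Lenl g) \<longrightarrow>
            (\<forall>\<epsilon> x. \<epsilon> \<ge> 0 \<longrightarrow> Lenl g \<epsilon> x \<subseteq> Lenl (fconj h \<circ> iswap) \<epsilon> x))"
  unfolding fconj_comp_iswap
proof (intro conjI ballI impI allI)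
  note h_ge = HT_self_pair_le[OF assms(3)]
  show "mutually_additive (Lenl h) (Lenl h') \<longleftrightarrow> (\<forall>z. fconj_swap h z \<le> h' z)"
    using mutually_additive_LenlI[OF h_ge]
      fconj_swap_le_if_mutually_additive[OF h_ge HT_self_pair_le[OF assms(4)]] by blast
  show "additive (Lenl h) \<longleftrightarrow> (\<forall>z. fconj_swap h z \<le> h z)"
    unfolding additive_def
    using mutually_additive_LenlI[OF h_ge] fconj_swap_le_if_mutually_additive[OF h_ge h_ge] by blast
  show "h = fconj_swap h \<longleftrightarrow> maximally_additive T h"
    using maximally_additive_if_fconj_swap_eq[OF assms(3)]
      fconj_swap_eq_if_maximally_additive[OF assms(2,3)] by metis
  show "mutually_additive (Lenl h) (Lenl (fconj_swap h))"
    by (rule mutually_additive_LenlI[OF h_ge]) simp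
  fix g \<epsilon> x
  assume "g \<in> HT T" "mutually_additive (Lenl h) (Lenl g)"
  then show "Lenl g \<epsilon> x \<subseteq> Lenl (fconj_swap h) \<epsilon> x"
    by (intro Lenl_antimono fconj_swap_le_if_mutually_additive[OF h_ge HT_self_pair_le])
qed

end
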